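(* Define, for natural numbers $n,h$, $M(n,h)=\frac{2n+2-2\lceil 2\sqrt{n+h}\,\rceil}{4}$. If $M(n,h)<h$, then there is no polyomino with $n$ tiles and $h$ holes. Moreover, for every $h\ge1$, $h\le M(g(h),h)$.
   Context: A polyomino is a finite union of closed unit squares (tiles) of the square lattice, any two meeting (if at all) in a whole edge, whose interior is connected. Its holes are the bounded connected components of its complement in the plane. For $h\ge1$, $g(h)$ is the minimum number of tiles of a polyomino with exactly $h$ holes. *)

theory Defs
  imports "HOL-Analysis.Analysis"
begin

definition tile :: "int \<times> int \<Rightarrow> (real \<times> real) set" where
  "tile c = {x. real_of_int (fst c) \<le> fst x \<and> fst x \<le> real_of_int (fst c) + 1 \<and>
               real_of_int (snd c) \<le> snd x \<and> snd x \<le> real_of_int (snd c) + 1}"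

definition region :: "(int \<times> int) set \<Rightarrow> (real \<times> real) set" where
  "region P = (\<Union>c\<in>P. tile c)"

definition is_polyomino :: "(int \<times> int) set \<Rightarrow> bool" where
  "is_polyomino P \<longleftrightarrow> finite P \<and> P \<noteq> {} \<and> connected (interior (region P))"

definition holes :: "(int \<times> int) set \<Rightarrow> (real \<times> real) set set" where
  "holes P = {C \<in> components (- region P). bounded C}"

definition num_holes :: "(int \<times> int) set \<Rightarrow> nat" where
  "num_holes P = card (holes P)"

definition g :: "nat \<Rightarrow> nat" where
  "g h = (LEAST n. \<exists>P. is_polyomino P \<and> card P = n \<and> num_holes P = h)"

definition M :: "nat \<Rightarrow> nat \<Rightarrow> real" where
  "M n h = (2 * real n + 2 - 2 * real_of_int \<lceil>2 * sqrt (real (n + h))\<rceil>) / 4"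

end

theory Submission
  imports Defs
begin

text \<open>
  Count directed boundary edges, i.e. pairs of a cell of a polyomino \<open>P\<close> and a lattice
  neighbour outside \<open>P\<close>. Of the \<open>4n\<close> directed edges leaving the \<open>n\<close> cells, those ending
  in \<open>P\<close> come in opposite pairs, and since \<open>P\<close> is connected a spanning tree provides at
  least \<open>2(n - 1)\<close> of them; so \<open>P\<close> has at most \<open>2n + 2\<close> boundary edges. Filling in the
  \<open>h\<close> holes yields at least \<open>n + h\<close> cells whose boundary edges are boundary edges of \<open>P\<close>,
  and every hole, being surrounded by \<open>P\<close>, accounts for at least four further ones.
  A set of cells meeting \<open>w\<close> columns and \<open>r\<close> rows has at most \<open>wr\<close> cells and at least
  \<open>2(w + r)\<close> boundary edges, so the filled set has at least \<open>2\<lceil>2 sqrt (n + h)\<rceil>\<close> of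
  them. Hence \<open>4h + 2\<lceil>2 sqrt (n + h)\<rceil> \<le> 2n + 2\<close>, which is \<open>h \<le> M n h\<close>.
  For the second claim it suffices that some polyomino has \<open>h\<close> holes: a
  \<open>(2h + 1) \<times> 3\<close> rectangle with every other cell of its middle row removed.
\<close>

definition open_rectangle :: "int \<times> int \<Rightarrow> int \<times> int \<Rightarrow> (real \<times> real) set" where
  "open_rectangle c d =
     {of_int (fst c) <..< of_int (fst d) + 1} \<times> {of_int (snd c) <..< of_int (snd d) + 1}"

abbreviation open_cell :: "int \<times> int \<Rightarrow> (real \<times> real) set" where
  "open_cell c \<equiv> open_rectangle c c"

definition cell_center :: "int \<times> int \<Rightarrow> real \<times> real" where
  "cell_center c = (of_int (fst c) + 1/2, of_int (snd c) + 1/2)"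

definition neighbours :: "int \<times> int \<Rightarrow> (int \<times> int) set" where
  "neighbours c = {(fst c + 1, snd c), (fst c - 1, snd c), (fst c, snd c + 1), (fst c, snd c - 1)}"

lemma tile_eq_Times:
  "tile c = {of_int (fst c) .. of_int (fst c) + 1} \<times> {of_int (snd c) .. of_int (snd c) + 1}"
  by (auto simp: tile_def)

lemma compact_tile: "compact (tile c)"
  by (simp add: tile_eq_Times compact_Times)

lemma in_tile_floor: "x \<in> tile (\<lfloor>fst x\<rfloor>, \<lfloor>snd x\<rfloor>)"
  by (simp add: tile_def)

lemma closure_open_cell: "closure (open_cell c) = tile c"
  by (simp add: open_rectangle_def tile_eq_Times closure_Times)

lemma open_open_rectangle: "open (open_rectangle c d)"
  by (simp add: open_rectangle_def open_Times)

lemma connected_open_rectangle: "connected (open_rectangle c d)"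
  by (simp add: open_rectangle_def convex_Times convex_connected)

lemma cell_center_in_open_cell: "cell_center c \<in> open_cell c"
  by (simp add: open_rectangle_def cell_center_def)

lemma open_cell_subset_tile: "open_cell c \<subseteq> tile c"
  by (auto simp: open_rectangle_def tile_def)

lemma cell_center_in_tile: "cell_center c \<in> tile c"
  using cell_center_in_open_cell open_cell_subset_tile by blast

lemma tile_meets_open_rectangle:
  assumes "x \<in> open_rectangle c d" "x \<in> tile e"
  shows "fst c \<le> fst e \<and> fst e \<le> fst d \<and> snd c \<le> snd e \<and> snd e \<le> snd d"
  using assms by (auto simp: open_rectangle_def tile_def int_le_real_less)

lemma tile_eq_if_in_open_cell: "x \<in> open_cell c \<Longrightarrow> x \<in> tile d \<Longrightarrow> d = c"
  by (drule (1) tile_meets_open_rectangle) (simp add: prod_eq_iff)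

lemma tiles_meet:
  assumes "x \<in> tile a" "x \<in> tile b"
  shows "\<bar>fst a - fst b\<bar> \<le> 1 \<and> \<bar>snd a - snd b\<bar> \<le> 1"
proof -
  have "real_of_int (fst a - fst b) \<le> 1" "real_of_int (fst b - fst a) \<le> 1"
       "real_of_int (snd a - snd b) \<le> 1" "real_of_int (snd b - snd a) \<le> 1"
    using assms by (auto simp: tile_def)
  then show ?thesis by (simp only: of_int_le_1_iff abs_le_iff) simp
qed

lemma neighbours_sym: "b \<in> neighbours a \<longleftrightarrow> a \<in> neighbours b"
  by (auto simp: neighbours_def)

lemma finite_neighbours [simp]: "finite (neighbours c)"
  by (simp add: neighbours_def)

lemma card_neighbours [simp]: "card (neighbours c) = 4"
  by (simp add: neighbours_def)

lemma in_region_iff: "x \<in> region P \<longleftrightarrow> (\<exists>c\<in>P. x \<in> tile c)"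
  by (simp add: region_def)

lemma tile_subset_region: "c \<in> P \<Longrightarrow> tile c \<subseteq> region P"
  by (auto simp: region_def)

lemma region_Un: "region (A \<union> B) = region A \<union> region B"
  by (auto simp: region_def)

lemma compact_region: "finite P \<Longrightarrow> compact (region P)"
  by (auto simp: region_def compact_tile)

lemma open_cell_disjoint_region: "c \<notin> P \<Longrightarrow> open_cell c \<inter> region P = {}"
  using tile_eq_if_in_open_cell by (fastforce simp: in_region_iff)

lemma cell_center_in_region_iff: "cell_center c \<in> region P \<longleftrightarrow> c \<in> P"
  using open_cell_disjoint_region cell_center_in_open_cell cell_center_in_tile tile_subset_region
  by blast

lemma open_cell_subset_interior_region: "c \<in> P \<Longrightarrow> open_cell c \<subseteq> interior (region P)"
  by (meson interior_maximal open_cell_subset_tile open_open_rectangle order_trans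
      tile_subset_region)

lemma tile_disjoint_interior_region:
  assumes "d \<notin> P"
  shows "tile d \<inter> interior (region P) = {}"
proof -
  have "open_cell d \<inter> interior (region P) = {}"
    using open_cell_disjoint_region[OF assms] interior_subset by blast
  then show ?thesis
    using open_Int_closure_eq_empty[OF open_interior] closure_open_cell by (metis inf_commute)
qed

definition domino :: "int \<times> int \<Rightarrow> int \<times> int \<Rightarrow> (real \<times> real) set" where
  "domino a b = open_rectangle (min (fst a) (fst b), min (snd a) (snd b))
                                (max (fst a) (fst b), max (snd a) (snd b))"

lemma open_domino: "open (domino a b)"
  by (simp add: domino_def open_open_rectangle)

lemma connected_domino: "connected (domino a b)"
  by (simp add: domino_def connected_open_rectangle)

lemma cell_centers_in_domino: "cell_center a \<in> domino a b" "cell_center b \<in> domino a b"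
  by (auto simp: domino_def open_rectangle_def cell_center_def of_int_min of_int_max)

lemma domino_meets_tile:
  assumes "b \<in> neighbours a" "x \<in> domino a b" "x \<in> tile d"
  shows "d = a \<or> d = b"
  using tile_meets_open_rectangle[OF assms(2)[unfolded domino_def] assms(3)] assms(1)
  by (auto simp: neighbours_def prod_eq_iff)

lemma domino_subset_tiles: "b \<in> neighbours a \<Longrightarrow> domino a b \<subseteq> tile a \<union> tile b"
  using domino_meets_tile in_tile_floor by blast

section \<open>Connectivity\<close>

definition inner_edges :: "(int \<times> int) set \<Rightarrow> ((int \<times> int) \<times> (int \<times> int)) set" where
  "inner_edges P = {(a, b). a \<in> P \<and> b \<in> P \<and> b \<in> neighbours a}"

lemma corner_cell:
  assumes "a \<noteq> b" "b \<notin> neighbours a" "x \<in> tile a" "x \<in> tile b"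
  shows "(fst a, snd b) \<in> neighbours a \<inter> neighbours b" "x \<in> tile (fst a, snd b)"
proof -
  show "x \<in> tile (fst a, snd b)"
    using assms(3,4) by (simp add: tile_def)
  obtain a1 a2 b1 b2 where ab: "a = (a1, a2)" "b = (b1, b2)"
    by (cases a, cases b)
  have close: "\<bar>a1 - b1\<bar> \<le> 1" "\<bar>a2 - b2\<bar> \<le> 1"
    using tiles_meet[OF assms(3,4)] by (simp_all add: ab)
  have "a1 \<noteq> b1" "a2 \<noteq> b2"
    using assms(1,2) close by (auto simp: ab neighbours_def abs_le_iff)
  then have "b1 = a1 + 1 \<or> b1 = a1 - 1" "b2 = a2 + 1 \<or> b2 = a2 - 1"
    using close by arith+
  then show "(fst a, snd b) \<in> neighbours a \<inter> neighbours b"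
    by (auto simp: ab neighbours_def)
qed

lemma neighbouring_cells_if_connected_interior:
  assumes conn: "connected (interior (region (A \<union> B)))"
    and fin: "finite A" "finite B" and disj: "A \<inter> B = {}" and ne: "A \<noteq> {}" "B \<noteq> {}"
  shows "\<exists>a\<in>A. \<exists>b\<in>B. b \<in> neighbours a"
proof (rule ccontr)
  assume apart: "\<not> ?thesis"
  define U where "U = interior (region (A \<union> B))"
  have cover: "U \<subseteq> - region A \<union> - region B"
  proof
    fix x assume "x \<in> U"
    show "x \<in> - region A \<union> - region B"
    proof (rule ccontr)
      assume "x \<notin> - region A \<union> - region B"
      then obtain a b where ab: "a \<in> A" "b \<in> B" "x \<in> tile a" "x \<in> tile b"
        by (auto simp: in_region_iff)
      then have "a \<noteq> b" "b \<notin> neighbours a"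
        using apart disj by auto
      then have corner: "(fst a, snd b) \<in> neighbours a" "(fst a, snd b) \<in> neighbours b"
          "x \<in> tile (fst a, snd b)"
        using corner_cell ab(3,4) by blast+
      have "(fst a, snd b) \<notin> A"
        using apart ab(2) neighbours_sym[THEN iffD1, OF corner(2)] by blast
      moreover have "(fst a, snd b) \<notin> B"
        using apart ab(1) corner(1) by blast
      ultimately show False
        using tile_disjoint_interior_region[of "(fst a, snd b)" "A \<union> B"] corner(3) \<open>x \<in> U\<close>
        by (auto simp: U_def)
    qed
  qed
  have "- region A \<inter> - region B \<inter> U = {}"
    using interior_subset[of "region (A \<union> B)"] by (auto simp: U_def region_Un)
  moreover have "open (- region A)" "open (- region B)"
    using fin by (simp_all add: open_Compl compact_imp_closed compact_region)
  moreover obtain a b where "a \<in> A" "b \<in> B"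
    using ne by blast
  then have "cell_center a \<in> - region B \<inter> U" "cell_center b \<in> - region A \<inter> U"
    using disj cell_center_in_region_iff[of a B] cell_center_in_region_iff[of b A]
      open_cell_subset_interior_region[of a "A \<union> B"] open_cell_subset_interior_region[of b "A \<union> B"]
      cell_center_in_open_cell[of a] cell_center_in_open_cell[of b]
    unfolding U_def by blast+
  ultimately show False
    using connectedD[OF conn[folded U_def] _ _ _ cover] by blast
qed

lemma inner_edges_rtrancl_if_connected_interior:
  assumes "finite P" "connected (interior (region P))" "r \<in> P" "b \<in> P"
  shows "(r, b) \<in> (inner_edges P)\<^sup>*"
proof (rule ccontr)
  assume "(r, b) \<notin> (inner_edges P)\<^sup>*"
  define A where "A = {c \<in> P. (r, c) \<in> (inner_edges P)\<^sup>*}"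
  have "A \<subseteq> P" "r \<in> A" "b \<in> P - A"
    using assms \<open>(r, b) \<notin> _\<close> by (auto simp: A_def)
  then have "\<exists>a\<in>A. \<exists>c\<in>P - A. c \<in> neighbours a"
    using neighbouring_cells_if_connected_interior[of A "P - A"] assms(1,2)
    by (metis Diff_disjoint Diff_partition empty_iff finite_Diff finite_subset)
  then show False
    by (auto simp: A_def inner_edges_def intro: rtrancl_into_rtrancl)
qed

lemma connected_interior_region_Int_tile:
  assumes "c \<in> P"
  shows "connected (interior (region P) \<inter> tile c)"
proof (rule connected_intermediate_closure[OF connected_open_rectangle])
  show "open_cell c \<subseteq> interior (region P) \<inter> tile c"
    using open_cell_subset_interior_region[OF assms] open_cell_subset_tile by blast
  show "interior (region P) \<inter> tile c \<subseteq> closure (open_cell c)"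
    by (simp add: closure_open_cell)
qed

lemma interior_region_Int_tile_subset_component:
  assumes "r \<in> P" "(r, c) \<in> (inner_edges P)\<^sup>*"
  shows "interior (region P) \<inter> tile c
           \<subseteq> connected_component_set (interior (region P)) (cell_center r)"
  using assms(2)
proof (induction rule: rtrancl_induct)
  case base
  show ?case
    using connected_interior_region_Int_tile[OF assms(1)] cell_center_in_tile[of r]
      open_cell_subset_interior_region[OF assms(1)] cell_center_in_open_cell[of r]
    by (intro connected_component_maximal) auto
next
  case (step c d)
  let ?U = "interior (region P)"
  let ?C = "connected_component_set ?U (cell_center r)"
  have cd: "c \<in> P" "d \<in> P" "d \<in> neighbours c"
    using step(2) by (auto simp: inner_edges_def)
  have "cell_center c \<in> ?C"
    using step.IH open_cell_subset_interior_region[OF cd(1)] cell_center_in_open_cell[of c]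
      cell_center_in_tile[of c] by blast
  then have C: "?C = connected_component_set ?U (cell_center c)"
    by (simp add: connected_component_eq)
  have "domino c d \<subseteq> ?U"
    using domino_subset_tiles[OF cd(3)] tile_subset_region[OF cd(1)] tile_subset_region[OF cd(2)]
    by (intro interior_maximal open_domino) blast
  then have "domino c d \<subseteq> ?C"
    unfolding C by (intro connected_component_maximal cell_centers_in_domino connected_domino)
  then have "cell_center d \<in> ?C"
    using cell_centers_in_domino(2) by blast
  then have D: "?C = connected_component_set ?U (cell_center d)"
    by (simp add: connected_component_eq)
  show ?case
    unfolding D
    using connected_interior_region_Int_tile[OF cd(2)] cell_center_in_tile[of d]
      open_cell_subset_interior_region[OF cd(2)] cell_center_in_open_cell[of d]
    by (intro connected_component_maximal) auto
qed

lemma connected_interior_if_inner_edges_rtrancl: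
  assumes "r \<in> P" and reach: "\<And>b. b \<in> P \<Longrightarrow> (r, b) \<in> (inner_edges P)\<^sup>*"
  shows "connected (interior (region P))"
proof -
  let ?U = "interior (region P)"
  have "?U \<subseteq> connected_component_set ?U (cell_center r)"
  proof
    fix x assume "x \<in> ?U"
    then have "x \<in> region P"
      using interior_subset by blast
    then obtain c where "c \<in> P" "x \<in> tile c"
      by (auto simp: in_region_iff)
    then show "x \<in> connected_component_set ?U (cell_center r)"
      using interior_region_Int_tile_subset_component[OF assms(1) reach] \<open>x \<in> ?U\<close> by blast
  qed
  then have "connected_component_set ?U (cell_center r) = ?U"
    using connected_component_subset by blast
  then show ?thesis
    by (metis connected_connected_component)
qed

section \<open>Counting edges\<close>

definition boundary_edges :: "(int \<times> int) set \<Rightarrow> ((int \<times> int) \<times> (int \<times> int)) set" where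
  "boundary_edges X = {(a, b). a \<in> X \<and> b \<notin> X \<and> b \<in> neighbours a}"

lemma finite_boundary_edges: "finite X \<Longrightarrow> finite (boundary_edges X)"
  by (rule finite_subset[of _ "Sigma X neighbours"]) (auto simp: boundary_edges_def)

lemma card_inner_edges_add_boundary_edges:
  assumes "finite P"
  shows "card (inner_edges P) + card (boundary_edges P) = 4 * card P"
proof -
  have "Sigma P neighbours = inner_edges P \<union> boundary_edges P"
       "inner_edges P \<inter> boundary_edges P = {}"
    by (auto simp: inner_edges_def boundary_edges_def)
  moreover have "card (Sigma P neighbours) = 4 * card P"
    using assms by simp
  moreover have "finite (Sigma P neighbours)"
    using assms by simp
  ultimately show ?thesis
    by (metis card_Un_disjoint finite_Un)
qed

lemma card_sym_relation_ge_if_connected: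
  fixes E :: "('a \<times> 'a) set"
  assumes "finite E" "sym E" "finite V" "r \<in> V" and reach: "\<And>v. v \<in> V \<Longrightarrow> (r, v) \<in> E\<^sup>*"
  shows "2 * (card V - 1) \<le> card E"
proof -
  define depth where "depth v = (LEAST k. (r, v) \<in> E ^^ k)" for v
  have "\<exists>u. (u, v) \<in> E \<and> depth u < depth v" if "v \<in> V - {r}" for v
  proof -
    have "(r, v) \<in> E ^^ depth v"
      unfolding depth_def using reach that by (metis DiffD1 LeastI_ex rtrancl_power)
    moreover have "depth v \<noteq> 0"
      using calculation that by (cases "depth v") auto
    ultimately obtain k u where "depth v = Suc k" "(r, u) \<in> E ^^ k" "(u, v) \<in> E"
      by (metis not0_implies_Suc relpow_Suc_E)
    moreover have "depth u \<le> k"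
      unfolding depth_def using calculation(2) by (rule Least_le)
    ultimately show ?thesis
      by auto
  qed
  then obtain parent
    where parent: "\<And>v. v \<in> V - {r} \<Longrightarrow> (parent v, v) \<in> E \<and> depth (parent v) < depth v"
    by metis
  \<comment> \<open>Each vertex other than \<open>r\<close> contributes the edge to its parent in both directions.\<close>
  define f where "f = (\<lambda>(v, forward). if forward then (parent v, v) else (v, parent v))"
  have "inj_on f ((V - {r}) \<times> UNIV)"
  proof (rule inj_onI)
    fix x y assume "x \<in> (V - {r}) \<times> UNIV" "y \<in> (V - {r}) \<times> UNIV" "f x = f y"
    moreover obtain v s w t where "x = (v, s)" "y = (w, t)"
      by fastforce
    ultimately show "x = y"
      using parent[of v] parent[of w] by (cases s; cases t) (auto simp: f_def)
  qed
  then have "2 * (card V - 1) = card (f ` ((V - {r}) \<times> UNIV))"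
    using assms(3,4) by (simp add: card_image card_cartesian_product)
  also have "\<dots> \<le> card E"
  proof (rule card_mono[OF \<open>finite E\<close> image_subsetI])
    fix p assume "p \<in> (V - {r}) \<times> (UNIV :: bool set)"
    then show "f p \<in> E"
      using parent[of "fst p"] symD[OF \<open>sym E\<close>] by (cases p) (auto simp: f_def)
  qed
  finally show ?thesis .
qed

lemma card_boundary_edges_polyomino_le:
  assumes "is_polyomino P"
  shows "card (boundary_edges P) \<le> 2 * card P + 2"
proof -
  have fin: "finite P" and "P \<noteq> {}" and conn: "connected (interior (region P))"
    using assms by (auto simp: is_polyomino_def)
  then obtain r where "r \<in> P"
    by blast
  have "inner_edges P \<subseteq> P \<times> P"
    by (auto simp: inner_edges_def)
  then have "finite (inner_edges P)"
    using fin finite_subset by blast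
  moreover have "sym (inner_edges P)"
    by (auto simp: sym_def inner_edges_def neighbours_sym)
  ultimately have "2 * (card P - 1) \<le> card (inner_edges P)"
    using fin \<open>r \<in> P\<close> inner_edges_rtrancl_if_connected_interior[OF fin conn \<open>r \<in> P\<close>]
    by (intro card_sym_relation_ge_if_connected)
  moreover have "card P \<ge> 1"
    using fin \<open>P \<noteq> {}\<close> by (simp add: Suc_le_eq card_gt_0_iff)
  ultimately show ?thesis
    using card_inner_edges_add_boundary_edges[OF fin] by linarith
qed

section \<open>An isoperimetric inequality\<close>

lemma column_extremes:
  fixes X :: "(int \<times> int) set"
  assumes "finite X" "z \<in> fst ` X"
  defines "S \<equiv> {y. (z, y) \<in> X}"
  shows "(z, Max S) \<in> X" "(z, Max S + 1) \<notin> X" "(z, Min S) \<in> X" "(z, Min S - 1) \<notin> X"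
    and "Min S \<le> Max S"
proof -
  have "S \<subseteq> snd ` X"
    by (force simp: S_def)
  then have fin: "finite S"
    using assms(1) finite_subset by blast
  have ne: "S \<noteq> {}"
    using assms(2) by (force simp: S_def)
  show "(z, Max S) \<in> X" "(z, Min S) \<in> X"
    using Max_in[OF fin ne] Min_in[OF fin ne] by (simp_all add: S_def)
  show "(z, Max S + 1) \<notin> X" "(z, Min S - 1) \<notin> X"
    using Max_ge[OF fin, of "Max S + 1"] Min_le[OF fin, of "Min S - 1"] by (auto simp: S_def)
  show "Min S \<le> Max S"
    using Min_le[OF fin Max_in[OF fin ne]] .
qed

lemma card_vertical_boundary_edges_ge:
  assumes "finite X"
  shows "2 * card (fst ` X) \<le> card {e \<in> boundary_edges X. fst (fst e) = fst (snd e)}"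
proof -
  let ?vertical = "{e \<in> boundary_edges X. fst (fst e) = fst (snd e)}"
  define upper where "upper z = Max {y. (z, y) \<in> X}" for z
  define lower where "lower z = Min {y. (z, y) \<in> X}" for z
  note ends = column_extremes[OF assms, folded upper_def lower_def]
  define f where "f = (\<lambda>(z, up). if up then ((z, upper z), (z, upper z + 1))
                                        else ((z, lower z), (z, lower z - 1)))"
  have "f p \<in> ?vertical" if "p \<in> fst ` X \<times> UNIV" for p
  proof -
    obtain z up where p: "p = (z, up)"
      by fastforce
    with that have "z \<in> fst ` X"
      by simp
    from ends[OF this] show ?thesis
      by (cases up) (simp_all add: p f_def boundary_edges_def neighbours_def)
  qed
  then have image: "f ` (fst ` X \<times> UNIV) \<subseteq> ?vertical"
    by (rule image_subsetI)
  have "inj_on f (fst ` X \<times> UNIV)"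
  proof (rule inj_onI)
    fix p q assume "p \<in> fst ` X \<times> UNIV" "q \<in> fst ` X \<times> UNIV" "f p = f q"
    moreover obtain z s w t where "p = (z, s)" "q = (w, t)"
      by fastforce
    ultimately show "p = q"
      using ends(5)[of z] by (cases s; cases t) (auto simp: f_def)
  qed
  then have "2 * card (fst ` X) = card (f ` (fst ` X \<times> UNIV))"
    by (simp add: card_image card_cartesian_product)
  also have "\<dots> \<le> card ?vertical"
    using finite_boundary_edges[OF assms] image by (intro card_mono) auto
  finally show ?thesis .
qed

lemma swap_in_neighbours_swap: "prod.swap b \<in> neighbours (prod.swap a) \<longleftrightarrow> b \<in> neighbours a"
  by (cases a; cases b) (auto simp: neighbours_def)

lemma boundary_edges_swap:
  "boundary_edges (prod.swap ` X) = map_prod prod.swap prod.swap ` boundary_edges X"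
proof -
  have involution_image: "x \<in> f ` A \<longleftrightarrow> f x \<in> A" if "\<And>y. f (f y) = y" for f :: "'b \<Rightarrow> 'b" and x A
    by (metis image_eqI imageE that)
  have "e \<in> boundary_edges (prod.swap ` X) \<longleftrightarrow> map_prod prod.swap prod.swap e \<in> boundary_edges X"
    for e
    using swap_in_neighbours_swap[of "snd e" "fst e"]
      involution_image[of prod.swap "fst e" X] involution_image[of prod.swap "snd e" X]
    by (cases e) (auto simp: boundary_edges_def)
  moreover have "map_prod prod.swap prod.swap (map_prod prod.swap prod.swap e) = e"
    for e :: "(int \<times> int) \<times> int \<times> int"
    by (cases e) simp
  ultimately show ?thesis
    using involution_image[of "map_prod prod.swap prod.swap"] by blast
qed

lemma card_boundary_edges_ge_projections:
  assumes "finite X"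
  shows "2 * card (fst ` X) + 2 * card (snd ` X) \<le> card (boundary_edges X)"
proof -
  let ?vertical = "{e \<in> boundary_edges X. fst (fst e) = fst (snd e)}"
  let ?horizontal = "{e \<in> boundary_edges X. snd (fst e) = snd (snd e)}"
  let ?swap = "map_prod prod.swap prod.swap :: (int \<times> int) \<times> int \<times> int \<Rightarrow> _"
  have "{e \<in> boundary_edges (prod.swap ` X). fst (fst e) = fst (snd e)} = ?swap ` ?horizontal"
    unfolding boundary_edges_swap Compr_image_eq by simp
  moreover have "card (?swap ` ?horizontal) = card ?horizontal"
    by (rule card_image) (auto simp: inj_on_def)
  ultimately have "2 * card (snd ` X) \<le> card ?horizontal"
    using card_vertical_boundary_edges_ge[of "prod.swap ` X"] assms by (simp add: image_image)
  then have "2 * card (fst ` X) + 2 * card (snd ` X) \<le> card ?vertical + card ?horizontal"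
    using card_vertical_boundary_edges_ge[OF assms] by linarith
  also have "\<dots> = card (?vertical \<union> ?horizontal)"
    using finite_boundary_edges[OF assms]
    by (intro card_Un_disjoint[symmetric]) (auto simp: boundary_edges_def neighbours_def)
  also have "\<dots> \<le> card (boundary_edges X)"
    using finite_boundary_edges[OF assms] by (intro card_mono) auto
  finally show ?thesis .
qed

lemma ceiling_two_sqrt_le:
  fixes w h m :: nat
  assumes "m \<le> w * h"
  shows "\<lceil>2 * sqrt (real m)\<rceil> \<le> int w + int h"
proof -
  have "4 * real m \<le> 4 * (real w * real h)"
    using assms by (simp add: of_nat_mult[symmetric] del: of_nat_mult)
  also have "\<dots> \<le> (real w + real h)\<^sup>2"
    using sum_squares_ge_zero[of "real w - real h" 0] by (simp add: power2_eq_square algebra_simps)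
  finally have "sqrt (4 * real m) \<le> real w + real h"
    by (simp add: real_le_lsqrt)
  then show ?thesis
    by (simp add: real_sqrt_mult ceiling_le_iff)
qed

lemma isoperimetric_boundary_edges:
  assumes "finite X" "m \<le> card X"
  shows "2 * \<lceil>2 * sqrt (real m)\<rceil> \<le> int (card (boundary_edges X))"
proof -
  have "card X \<le> card (fst ` X \<times> snd ` X)"
    using assms(1) subset_fst_snd by (intro card_mono) auto
  then have "\<lceil>2 * sqrt (real m)\<rceil> \<le> int (card (fst ` X)) + int (card (snd ` X))"
    using assms(2) by (intro ceiling_two_sqrt_le) (simp add: card_cartesian_product)
  then show ?thesis
    using card_boundary_edges_ge_projections[OF assms(1)] by linarith
qed

section \<open>Filling the holes\<close>

definition complement_component :: "(int \<times> int) set \<Rightarrow> real \<times> real \<Rightarrow> (real \<times> real) set" where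
  "complement_component P x = connected_component_set (- region P) x"

text \<open>The cells of \<open>P\<close> itself are filled too: the complement component of a point of
  \<open>region P\<close> is empty.\<close>
definition filled :: "(int \<times> int) set \<Rightarrow> (int \<times> int) set" where
  "filled P = {c. bounded (complement_component P (cell_center c))}"

definition cells_of :: "(real \<times> real) set \<Rightarrow> (int \<times> int) set" where
  "cells_of C = {c. cell_center c \<in> C}"

lemma cell_center_in_complement_component:
  "c \<notin> P \<Longrightarrow> cell_center c \<in> complement_component P (cell_center c)"
  by (simp add: complement_component_def cell_center_in_region_iff)

lemma floor_cell_center_in_complement_component:
  assumes "x \<notin> region P"
  shows "cell_center (\<lfloor>fst x\<rfloor>, \<lfloor>snd x\<rfloor>) \<in> complement_component P x"
proof -
  define c where "c = (\<lfloor>fst x\<rfloor>, \<lfloor>snd x\<rfloor>)"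
  have "x \<in> tile c"
    unfolding c_def by (rule in_tile_floor)
  then have "c \<notin> P"
    using assms tile_subset_region by blast
  have "connected (insert x (open_cell c))"
    using \<open>x \<in> tile c\<close> closure_open_cell[of c] closure_subset[of "open_cell c"]
    by (intro connected_intermediate_closure[OF connected_open_rectangle[of c c]]) auto
  moreover have "insert x (open_cell c) \<subseteq> - region P"
    using assms open_cell_disjoint_region[OF \<open>c \<notin> P\<close>] by blast
  ultimately have "insert x (open_cell c) \<subseteq> complement_component P x"
    unfolding complement_component_def by (intro connected_component_maximal) auto
  then show ?thesis
    using cell_center_in_open_cell[of c] by (auto simp: c_def)
qed

lemma complement_component_neighbour_eq:
  assumes "b \<in> neighbours a" "a \<notin> P" "b \<notin> P"
  shows "complement_component P (cell_center a) = complement_component P (cell_center b)"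
proof -
  have "domino a b \<subseteq> - region P"
    using domino_meets_tile[OF assms(1)] assms(2,3) by (fastforce simp: in_region_iff)
  then have "domino a b \<subseteq> complement_component P (cell_center a)"
    unfolding complement_component_def
    by (intro connected_component_maximal cell_centers_in_domino connected_domino)
  then show ?thesis
    using cell_centers_in_domino(2) unfolding complement_component_def
    by (metis connected_component_eq subsetD)
qed

lemma unbounded_complement_component:
  assumes "region P \<subseteq> K" "bounded K" "convex K" "x \<notin> K"
  shows "\<not> bounded (complement_component P x)"
proof
  assume bnd: "bounded (complement_component P x)"
  have "connected (- K)"
    using assms(2,3) by (intro connected_complement_bounded_convex) auto
  then have "- K \<subseteq> complement_component P x"
    unfolding complement_component_def using assms(1,4) by (intro connected_component_maximal) auto
  then have "bounded (- K)"
    using bnd bounded_subset by blast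
  then show False
    using assms(2) bounded_Un[of K "- K"] by (simp add: Compl_partition)
qed

lemma finite_cells_of_bounded:
  assumes "bounded S"
  shows "finite (cells_of S)"
proof -
  obtain B where B: "\<And>x. x \<in> S \<Longrightarrow> norm x \<le> B"
    using assms by (auto simp: bounded_iff)
  have "cells_of S \<subseteq> {-\<lceil>B\<rceil>..\<lceil>B\<rceil>} \<times> {-\<lceil>B\<rceil>..\<lceil>B\<rceil>}"
  proof
    fix c assume "c \<in> cells_of S"
    then have "norm (cell_center c) \<le> B"
      using B by (simp add: cells_of_def)
    then have "\<bar>of_int (fst c) + 1/2\<bar> \<le> B" "\<bar>of_int (snd c) + 1/2\<bar> \<le> B"
      using norm_fst_le[of "of_int (fst c) + 1/2 :: real" "of_int (snd c) + 1/2 :: real"]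
        norm_snd_le[of "of_int (snd c) + 1/2 :: real" "of_int (fst c) + 1/2 :: real"]
      by (simp_all add: cell_center_def)
    moreover have "B \<le> of_int \<lceil>B\<rceil>"
      by (rule le_of_int_ceiling)
    ultimately have "-\<lceil>B\<rceil> \<le> fst c \<and> fst c \<le> \<lceil>B\<rceil> \<and> -\<lceil>B\<rceil> \<le> snd c \<and> snd c \<le> \<lceil>B\<rceil>"
      unfolding int_le_real_less abs_le_iff of_int_minus by (intro conjI; linarith)
    then show "c \<in> {-\<lceil>B\<rceil>..\<lceil>B\<rceil>} \<times> {-\<lceil>B\<rceil>..\<lceil>B\<rceil>}"
      by (simp add: mem_Times_iff)
  qed
  then show ?thesis
    by (rule finite_subset) simp
qed

lemma finite_filled:
  assumes "finite P"
  shows "finite (filled P)"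
proof -
  obtain R where "\<forall>x\<in>region P. norm x \<le> R"
    using compact_imp_bounded[OF compact_region[OF assms]] by (auto simp: bounded_iff)
  then have R: "region P \<subseteq> cball 0 R"
    by (auto simp: mem_cball_0)
  have "filled P \<subseteq> cells_of (cball 0 R)"
  proof
    fix c assume "c \<in> filled P"
    then have "bounded (complement_component P (cell_center c))"
      by (simp add: filled_def)
    then show "c \<in> cells_of (cball 0 R)"
      using unbounded_complement_component[OF R bounded_cball convex_cball, of "cell_center c"]
      by (auto simp: cells_of_def)
  qed
  then show ?thesis
    using finite_cells_of_bounded finite_subset by blast
qed

lemma subset_filled: "P \<subseteq> filled P"
proof
  fix c assume "c \<in> P"
  then have "cell_center c \<notin> - region P"
    by (simp add: cell_center_in_region_iff)
  then have "complement_component P (cell_center c) = {}"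
    unfolding complement_component_def connected_component_eq_empty .
  then show "c \<in> filled P"
    by (simp add: filled_def)
qed

lemma complement_component_surrounded_cell:
  assumes "c \<notin> P" "neighbours c \<subseteq> P"
  shows "complement_component P (cell_center c) \<subseteq> open_cell c"
proof -
  define C where "C = complement_component P (cell_center c)"
  have "tile c \<inter> - region P \<subseteq> open_cell c"
  proof
    fix x assume x: "x \<in> tile c \<inter> - region P"
    obtain x1 x2 c1 c2 where xc: "x = (x1, x2)" "c = (c1, c2)"
      by (cases x, cases c)
    have off: "x \<notin> tile d" if "d \<in> neighbours c" for d
      using x assms(2) that tile_subset_region by blast
    have "x1 \<noteq> of_int c1" "x1 \<noteq> of_int c1 + 1" "x2 \<noteq> of_int c2" "x2 \<noteq> of_int c2 + 1"
      using x off[of "(c1 - 1, c2)"] off[of "(c1 + 1, c2)"] off[of "(c1, c2 - 1)"]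
        off[of "(c1, c2 + 1)"]
      by (auto simp: xc neighbours_def tile_def)
    then show "x \<in> open_cell c"
      using x by (auto simp: xc tile_def open_rectangle_def)
  qed
  moreover have "C \<subseteq> - region P"
    unfolding C_def complement_component_def by (rule connected_component_subset)
  ultimately have cover: "C \<subseteq> open_cell c \<union> - tile c"
    by blast
  have "cell_center c \<in> open_cell c \<inter> C"
    using cell_center_in_open_cell cell_center_in_complement_component[OF assms(1)]
    by (simp add: C_def)
  moreover have "connected C"
    by (simp add: C_def complement_component_def)
  moreover have "open_cell c \<inter> - tile c \<inter> C = {}"
    using open_cell_subset_tile by blast
  moreover have "open (- tile c)"
    using compact_tile by (simp add: open_Compl compact_imp_closed)
  ultimately have "- tile c \<inter> C = {}"
    using connectedD[OF _ open_open_rectangle _ _ cover] by blast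
  then show ?thesis
    using cover by (auto simp: C_def)
qed

lemma hole_eq_complement_component:
  assumes "C \<in> holes P"
  obtains x where "x \<notin> region P" "C = complement_component P x" "bounded C"
  using assms unfolding holes_def complement_component_def components_iff by blast

lemma cells_of_hole:
  assumes "C \<in> holes P"
  shows "cells_of C \<noteq> {}"
    and "c \<in> cells_of C \<Longrightarrow> complement_component P (cell_center c) = C"
    and "cells_of C \<subseteq> filled P"
    and "cells_of C \<inter> P = {}"
proof -
  obtain x where x: "x \<notin> region P" "C = complement_component P x" "bounded C"
    using hole_eq_complement_component[OF assms] .
  show "cells_of C \<noteq> {}"
    using floor_cell_center_in_complement_component[OF x(1)] x(2) by (auto simp: cells_of_def)
  show C: "complement_component P (cell_center c) = C" if "c \<in> cells_of C" for c
    using that x(2) connected_component_eq by (auto simp: cells_of_def complement_component_def)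
  show "cells_of C \<subseteq> filled P"
    using C x(3) by (auto simp: filled_def)
  have "C \<subseteq> - region P"
    using x(2) connected_component_subset by (auto simp: complement_component_def)
  then show "cells_of C \<inter> P = {}"
    using cell_center_in_region_iff by (auto simp: cells_of_def)
qed

lemma cells_of_holes_disjoint:
  assumes "C \<in> holes P" "C' \<in> holes P" "C \<noteq> C'"
  shows "cells_of C \<inter> cells_of C' = {}"
  using components_nonoverlap[of C "- region P" C'] assms by (auto simp: holes_def cells_of_def)

lemma finite_holes:
  assumes "finite P"
  shows "finite (holes P)"
proof -
  have "inj_on cells_of (holes P)"
    using cells_of_hole(1) cells_of_holes_disjoint by (metis Int_absorb inj_onI)
  moreover have "cells_of ` holes P \<subseteq> Pow (filled P)"
    using cells_of_hole(3) by blast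
  then have "finite (cells_of ` holes P)"
    using finite_filled[OF assms] by (meson finite_Pow_iff finite_subset)
  ultimately show ?thesis
    using finite_imageD by blast
qed

lemma card_add_num_holes_le_card_filled:
  assumes "finite P"
  shows "card P + num_holes P \<le> card (filled P)"
proof -
  let ?hole_cells = "\<Union>(cells_of ` holes P)"
  have fin: "finite (holes P)" "\<And>C. C \<in> holes P \<Longrightarrow> finite (cells_of C)"
    using finite_holes[OF assms] finite_filled[OF assms] cells_of_hole(3) finite_subset by blast+
  have "num_holes P = (\<Sum>C\<in>holes P. 1)"
    by (simp add: num_holes_def)
  also have "\<dots> \<le> (\<Sum>C\<in>holes P. card (cells_of C))"
    using fin cells_of_hole(1) by (intro sum_mono) (simp add: Suc_le_eq card_gt_0_iff)
  also have "\<dots> = card ?hole_cells"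
    using fin cells_of_holes_disjoint by (intro card_UN_disjoint[symmetric]) auto
  finally have "card P + num_holes P \<le> card (P \<union> ?hole_cells)"
    using assms fin cells_of_hole(4) by (subst card_Un_disjoint) auto
  also have "\<dots> \<le> card (filled P)"
    using subset_filled cells_of_hole(3) by (intro card_mono[OF finite_filled[OF assms]]) blast
  finally show ?thesis .
qed

lemma boundary_edges_filled_subset: "boundary_edges (filled P) \<subseteq> boundary_edges P"
proof clarify
  fix a b assume "(a, b) \<in> boundary_edges (filled P)"
  then have ab: "a \<in> filled P" "b \<notin> filled P" "b \<in> neighbours a"
    by (auto simp: boundary_edges_def)
  then have "b \<notin> P"
    using subset_filled by blast
  moreover have "a \<in> P"
    using complement_component_neighbour_eq[OF ab(3) _ \<open>b \<notin> P\<close>] ab(1,2)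
    by (cases "a \<in> P") (auto simp: filled_def)
  ultimately show "(a, b) \<in> boundary_edges P"
    using ab(3) by (simp add: boundary_edges_def)
qed

definition hole_edges ::
    "(int \<times> int) set \<Rightarrow> (real \<times> real) set \<Rightarrow> ((int \<times> int) \<times> (int \<times> int)) set" where
  "hole_edges P C = {e \<in> boundary_edges P. snd e \<in> cells_of C}"

lemma swap_boundary_edges_cells_of_hole:
  assumes "C \<in> holes P"
  shows "prod.swap ` boundary_edges (cells_of C) \<subseteq> hole_edges P C"
proof (rule image_subsetI)
  fix e assume "e \<in> boundary_edges (cells_of C)"
  moreover obtain a b where e: "e = (a, b)"
    by (cases e)
  ultimately have ab: "a \<in> cells_of C" "b \<notin> cells_of C" "b \<in> neighbours a"
    by (auto simp: boundary_edges_def)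
  have "a \<notin> P"
    using ab(1) cells_of_hole(4)[OF assms] by blast
  have "b \<in> P"
  proof (rule ccontr)
    assume "b \<notin> P"
    then have "complement_component P (cell_center b) = C"
      using complement_component_neighbour_eq[OF ab(3) \<open>a \<notin> P\<close>] cells_of_hole(2)[OF assms ab(1)]
      by simp
    then show False
      using ab(2) cell_center_in_complement_component[OF \<open>b \<notin> P\<close>] by (simp add: cells_of_def)
  qed
  then show "prod.swap e \<in> hole_edges P C"
    using ab(1) \<open>a \<notin> P\<close> neighbours_sym[THEN iffD1, OF ab(3)]
    by (simp add: e hole_edges_def boundary_edges_def)
qed

lemma four_le_card_hole_edges:
  assumes "finite P" "C \<in> holes P"
  shows "4 \<le> card (hole_edges P C)"
proof -
  let ?K = "cells_of C"
  have K: "finite ?K" "?K \<noteq> {}"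
    using cells_of_hole(1,3)[OF assms(2)] finite_filled[OF assms(1)] finite_subset by blast+
  have "card (prod.swap ` boundary_edges ?K) \<le> card (hole_edges P C)"
    using finite_boundary_edges[OF assms(1)] swap_boundary_edges_cells_of_hole[OF assms(2)]
    by (intro card_mono) (simp_all add: hole_edges_def)
  then have "card (boundary_edges ?K) \<le> card (hole_edges P C)"
    by (simp add: card_image)
  moreover have "card (fst ` ?K) \<ge> 1" "card (snd ` ?K) \<ge> 1"
    using K by (simp_all add: Suc_le_eq card_gt_0_iff)
  ultimately show ?thesis
    using card_boundary_edges_ge_projections[OF K(1)] by linarith
qed

lemma card_boundary_edges_filled_add_holes_le:
  assumes "finite P"
  shows "card (boundary_edges (filled P)) + 4 * num_holes P \<le> card (boundary_edges P)"
proof -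
  let ?hole_edges = "\<Union>(hole_edges P ` holes P)"
  have fin: "finite (holes P)" "\<And>C. finite (hole_edges P C)"
    using finite_holes[OF assms] finite_boundary_edges[OF assms] by (auto simp: hole_edges_def)
  have disj: "boundary_edges (filled P) \<inter> ?hole_edges = {}"
    using cells_of_hole(3)[of _ P] by (fastforce simp: hole_edges_def boundary_edges_def)
  have "4 * num_holes P = (\<Sum>C\<in>holes P. 4)"
    by (simp add: num_holes_def)
  also have "\<dots> \<le> (\<Sum>C\<in>holes P. card (hole_edges P C))"
    using four_le_card_hole_edges[OF assms] by (intro sum_mono)
  also have "\<dots> = card ?hole_edges"
  proof (rule card_UN_disjoint[symmetric])
    show "\<forall>C\<in>holes P. \<forall>C'\<in>holes P. C \<noteq> C' \<longrightarrow> hole_edges P C \<inter> hole_edges P C' = {}"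
      using cells_of_holes_disjoint[of _ P] by (fastforce simp: hole_edges_def)
  qed (use fin in auto)
  finally have "card (boundary_edges (filled P)) + 4 * num_holes P
      \<le> card (boundary_edges (filled P) \<union> ?hole_edges)"
    using fin finite_boundary_edges[OF finite_filled[OF assms]] disj
    by (subst card_Un_disjoint) auto
  also have "\<dots> \<le> card (boundary_edges P)"
    using finite_boundary_edges[OF assms] boundary_edges_filled_subset
    by (intro card_mono) (auto simp: hole_edges_def)
  finally show ?thesis .
qed

lemma num_holes_le_M:
  assumes "is_polyomino P"
  shows "real (num_holes P) \<le> M (card P) (num_holes P)"
proof -
  have fin: "finite P"
    using assms by (simp add: is_polyomino_def)
  have "2 * \<lceil>2 * sqrt (real (card P + num_holes P))\<rceil> \<le> int (card (boundary_edges (filled P)))"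
    using card_add_num_holes_le_card_filled[OF fin] finite_filled[OF fin]
    by (intro isoperimetric_boundary_edges)
  then have "4 * int (num_holes P) + 2 * \<lceil>2 * sqrt (real (card P + num_holes P))\<rceil>
      \<le> 2 * int (card P) + 2"
    using card_boundary_edges_filled_add_holes_le[OF fin] card_boundary_edges_polyomino_le[OF assms]
    by linarith
  then have "4 * real (num_holes P) + 2 * of_int \<lceil>2 * sqrt (real (card P + num_holes P))\<rceil>
      \<le> 2 * real (card P) + 2"
    by (metis (mono_tags) of_int_add of_int_le_iff of_int_mult of_int_numeral of_int_of_nat_eq)
  then show ?thesis
    by (simp add: M_def)
qed

section \<open>A polyomino with \<open>h\<close> holes\<close>

definition ladder :: "nat \<Rightarrow> (int \<times> int) set" where
  "ladder h = {(i, j). 0 \<le> i \<and> i \<le> 2 * int h \<and> 0 \<le> j \<and> j \<le> 2 \<and> \<not> (j = 1 \<and> odd i)}"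

definition ladder_gap :: "nat \<Rightarrow> int \<times> int" where
  "ladder_gap k = (2 * int k + 1, 1)"

lemma finite_ladder: "finite (ladder h)"
  by (rule finite_subset[of _ "{0..2 * int h} \<times> {0..2}"]) (auto simp: ladder_def)

lemma ladder_row_rtrancl:
  assumes "j = 0 \<or> j = 2" "i \<le> 2 * h"
  shows "((0, j), (int i, j)) \<in> (inner_edges (ladder h))\<^sup>*"
  using assms(2)
proof (induction i)
  case 0
  show ?case
    by simp
next
  case (Suc i)
  then have "((0, j), (int i, j)) \<in> (inner_edges (ladder h))\<^sup>*"
    by simp
  moreover have "((int i, j), (int (Suc i), j)) \<in> inner_edges (ladder h)"
    using Suc.prems assms(1) by (auto simp: inner_edges_def ladder_def neighbours_def)
  ultimately show ?case
    by (rule rtrancl_into_rtrancl)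
qed

lemma ladder_rtrancl:
  assumes "b \<in> ladder h"
  shows "((0, 0), b) \<in> (inner_edges (ladder h))\<^sup>*"
proof -
  obtain i j where b: "b = (i, j)"
    and ij: "0 \<le> i" "i \<le> 2 * int h" "0 \<le> j" "j \<le> 2" "\<not> (j = 1 \<and> odd i)"
    using assms by (auto simp: ladder_def)
  have "nat i \<le> 2 * h"
    using ij by linarith
  then have bottom_row: "((0, 0), (i, 0)) \<in> (inner_edges (ladder h))\<^sup>*"
    and top_row: "((0, 2), (i, 2)) \<in> (inner_edges (ladder h))\<^sup>*"
    using ladder_row_rtrancl[of _ "nat i" h] ij(1) by simp_all
  consider "j = 0" | "j = 1" | "j = 2"
    using ij by linarith
  then show ?thesis
  proof cases
    case 1
    then show ?thesis
      using bottom_row b by simp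
  next
    case 2
    then have "((i, 0), (i, 1)) \<in> inner_edges (ladder h)"
      using ij by (auto simp: inner_edges_def ladder_def neighbours_def)
    then show ?thesis
      using bottom_row b 2 by (simp add: rtrancl_into_rtrancl)
  next
    case 3
    have "((0, 0), (0, 1)) \<in> inner_edges (ladder h)" "((0, 1), (0, 2)) \<in> inner_edges (ladder h)"
      by (auto simp: inner_edges_def ladder_def neighbours_def)
    then have "((0, 0), (0, 2)) \<in> (inner_edges (ladder h))\<^sup>*"
      by (meson r_into_rtrancl rtrancl_into_rtrancl)
    then show ?thesis
      using top_row b 3 by (simp add: rtrancl_trans)
  qed
qed

lemma is_polyomino_ladder: "is_polyomino (ladder h)"
proof -
  have "(0, 0) \<in> ladder h"
    by (simp add: ladder_def)
  then show ?thesis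
    unfolding is_polyomino_def
    using finite_ladder connected_interior_if_inner_edges_rtrancl[OF _ ladder_rtrancl] by blast
qed

lemma ladder_gap_notin: "ladder_gap k \<notin> ladder h"
  by (simp add: ladder_gap_def ladder_def)

lemma neighbours_ladder_gap: "k < h \<Longrightarrow> neighbours (ladder_gap k) \<subseteq> ladder h"
  by (auto simp: ladder_gap_def ladder_def neighbours_def)

lemma ladder_gap_if_in_box:
  assumes "c \<notin> ladder h" "0 \<le> fst c" "fst c \<le> 2 * int h" "0 \<le> snd c" "snd c \<le> 2"
  obtains k where "k < h" "c = ladder_gap k"
proof -
  obtain i j where c: "c = (i, j)"
    by (cases c)
  with assms have "j = 1" "odd i"
    by (auto simp: ladder_def)
  then obtain b where "i = 2 * b + 1"
    by (auto elim: oddE)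
  with assms c have "0 \<le> b" "b < int h"
    by auto
  then show thesis
    using that[of "nat b"] c \<open>j = 1\<close> \<open>i = 2 * b + 1\<close> by (simp add: ladder_gap_def)
qed

lemma bounded_complement_component_ladder:
  assumes "c \<notin> ladder h" "bounded (complement_component (ladder h) (cell_center c))"
  obtains k where "k < h" "c = ladder_gap k"
proof -
  let ?K = "{0 .. 2 * real h + 1} \<times> {0 .. 3 :: real}"
  have "region (ladder h) \<subseteq> ?K"
  proof
    fix x assume "x \<in> region (ladder h)"
    then obtain d where "d \<in> ladder h" "x \<in> tile d"
      by (auto simp: in_region_iff)
    then show "x \<in> ?K"
      by (cases d) (auto simp: ladder_def tile_def mem_Times_iff)
  qed
  moreover have "bounded ?K"
    by (intro bounded_Times) auto
  moreover have "convex ?K"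
    by (intro convex_Times) auto
  ultimately have "cell_center c \<in> ?K"
    using unbounded_complement_component assms(2) by blast
  then have "0 \<le> fst c" "fst c \<le> 2 * int h" "0 \<le> snd c" "snd c \<le> 2"
    by (auto simp: cell_center_def int_le_real_less)
  then show thesis
    using ladder_gap_if_in_box[OF assms(1)] that by blast
qed

lemma holes_ladder:
  "holes (ladder h) = (\<lambda>k. complement_component (ladder h) (cell_center (ladder_gap k))) ` {..<h}"
  (is "_ = ?hole ` _")
proof
  show "holes (ladder h) \<subseteq> ?hole ` {..<h}"
  proof
    fix C assume C: "C \<in> holes (ladder h)"
    then obtain c where "c \<in> cells_of C"
      using cells_of_hole(1) by blast
    then have c: "complement_component (ladder h) (cell_center c) = C" "c \<notin> ladder h"
      using cells_of_hole(2,4)[OF C] by auto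
    have "bounded (complement_component (ladder h) (cell_center c))"
      using C c(1) by (simp add: holes_def)
    with c(2) obtain k where "k < h" "c = ladder_gap k"
      by (rule bounded_complement_component_ladder)
    then show "C \<in> ?hole ` {..<h}"
      using c(1) by (intro image_eqI[of _ _ k]) auto
  qed
  show "?hole ` {..<h} \<subseteq> holes (ladder h)"
  proof (rule image_subsetI)
    fix k assume "k \<in> {..<h}"
    let ?C = "?hole k"
    have "cell_center (ladder_gap k) \<in> - region (ladder h)"
      using cell_center_in_region_iff ladder_gap_notin by blast
    then have "?C \<in> components (- region (ladder h))"
      unfolding complement_component_def by (rule componentsI)
    moreover have "?C \<subseteq> tile (ladder_gap k)"
      using complement_component_surrounded_cell[OF ladder_gap_notin neighbours_ladder_gap]
        open_cell_subset_tile \<open>k \<in> {..<h}\<close> by blast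
    then have "bounded ?C"
      using compact_tile compact_imp_bounded bounded_subset by blast
    ultimately show "?C \<in> holes (ladder h)"
      by (simp add: holes_def)
  qed
qed

lemma num_holes_ladder: "num_holes (ladder h) = h"
proof -
  have "inj_on (\<lambda>k. complement_component (ladder h) (cell_center (ladder_gap k))) {..<h}"
  proof (rule inj_onI)
    fix k l assume "k \<in> {..<h}" "l \<in> {..<h}" and eq:
      "complement_component (ladder h) (cell_center (ladder_gap k))
        = complement_component (ladder h) (cell_center (ladder_gap l))"
    have "cell_center (ladder_gap l)
        \<in> complement_component (ladder h) (cell_center (ladder_gap k))"
      unfolding eq by (rule cell_center_in_complement_component[OF ladder_gap_notin])
    also have "\<dots> \<subseteq> open_cell (ladder_gap k)"
      using \<open>k \<in> {..<h}\<close>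
      by (intro complement_component_surrounded_cell ladder_gap_notin neighbours_ladder_gap) simp
    finally have "ladder_gap l = ladder_gap k"
      using tile_eq_if_in_open_cell cell_center_in_tile by blast
    then show "k = l"
      by (simp add: ladder_gap_def)
  qed
  then show ?thesis
    by (simp add: num_holes_def holes_ladder card_image)
qed

theorem lemma2:
  shows "(\<forall>n h :: nat. M n h < real h \<longrightarrow>
            \<not> (\<exists>P. is_polyomino P \<and> card P = n \<and> num_holes P = h))
         \<and> (\<forall>h :: nat. h \<ge> 1 \<longrightarrow> real h \<le> M (g h) h)"
proof (intro conjI allI impI notI)
  fix n h :: nat
  assume "M n h < real h" "\<exists>P. is_polyomino P \<and> card P = n \<and> num_holes P = h"
  then obtain P where "is_polyomino P" "card P = n" "num_holes P = h" "M n h < real h"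
    by blast
  then show False
    using num_holes_le_M[of P] by simp
next
  fix h :: nat
  have "\<exists>P. is_polyomino P \<and> card P = g h \<and> num_holes P = h"
    unfolding g_def by (rule LeastI_ex) (use is_polyomino_ladder num_holes_ladder in blast)
  then obtain P where "is_polyomino P" "card P = g h" "num_holes P = h"
    by blast
  then show "real h \<le> M (g h) h"
    using num_holes_le_M[of P] by simp
qed

end
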